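(* Assume the Axiom of Choice. Let $A$ be a $\boldsymbol{\mathit{ba}\ell}$-algebra, $X$ the set of proper archimedean $\ell$-ideals of $A$ ordered by inclusion with the Alexandroff topology, and $Y_A\subseteq X$ the set of maximal $\ell$-ideals of $A$. Then the restriction map $\psi:N(X)\to B(Y_A)$, $\psi(f)=f|_{Y_A}$, is a $\boldsymbol{\mathit{ba}\ell}$-isomorphism.
   Context: A $\boldsymbol{\mathit{ba}\ell}$-algebra is a commutative unital lattice-ordered algebra $A$ over $\mathbb R$ that is bounded (for every $a\in A$ there is an integer $n\ge1$ with $a\le n\cdot1$) and archimedean (if $na\le b$ for all $n\ge1$ then $a\le0$). An $\ell$-ideal is a ring ideal $I$ with $|a|\le|b|$, $b\in I\Rightarrow a\in I$; it is archimedean if $A/I$ is archimedean; every maximal $\ell$-ideal is archimedean. The Alexandroff topology on a poset has the upsets as open sets. For a space $X$, $B(X)$ is the $\boldsymbol{\mathit{ba}\ell}$-algebra of bounded real functions with pointwise operations, $f_*(x)=\sup\{\inf f[U]\mid U\text{ open}\ni x\}$, $f^*(x)=\inf\{\sup f[U]\mid U\text{ open}\ni x\}$, $f^\#=(f^* )_*$, and $N(X)=\{f\in B(X)\mid f=f^\#\}$, a Dedekind complete $\boldsymbol{\mathit{ba}\ell}$-algebra whose operations are the normalizations $(\cdot)^\#$ of pointwise operations. *)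

theory Defs
  imports "HOL-Analysis.Analysis"
begin

text \<open>A commutative unital real algebra carrying a lattice order that makes it an
 \<ell>-group, with positive cone closed under products and positive scalars
 (lattice-ordered algebra), which is bounded (1 is a strong order unit)
 and archimedean.\<close>


definition bal_algebra :: "'a::{comm_ring_1, real_algebra_1, ordered_ab_group_add, lattice} itself \<Rightarrow> bool" where
  "bal_algebra _ \<longleftrightarrow>
     (\<forall>a b :: 'a. 0 \<le> a \<longrightarrow> 0 \<le> b \<longrightarrow> 0 \<le> a * b) \<and>
     (\<forall>(r::real) (a::'a). 0 \<le> r \<longrightarrow> 0 \<le> a \<longrightarrow> 0 \<le> r *\<^sub>R a) \<and>
     (\<forall>a :: 'a. \<exists>n::nat. n \<ge> 1 \<and> a \<le> of_nat n) \<and>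
     (\<forall>a b :: 'a. (\<forall>n::nat. n \<ge> 1 \<longrightarrow> of_nat n * a \<le> b) \<longrightarrow> a \<le> 0)"

definition labs :: "'a::{ordered_ab_group_add, lattice} \<Rightarrow> 'a" where
  "labs a = sup a (- a)"

definition l_ideal :: "'a::{comm_ring_1, ordered_ab_group_add, lattice} set \<Rightarrow> bool" where
  "l_ideal I \<longleftrightarrow> 0 \<in> I \<and> (\<forall>a\<in>I. \<forall>b\<in>I. a + b \<in> I) \<and> (\<forall>a. \<forall>b\<in>I. a * b \<in> I)
     \<and> (\<forall>a b. b \<in> I \<and> labs a \<le> labs b \<longrightarrow> a \<in> I)"

text \<open>The order of the quotient A/I for an \<ell>-ideal I:
  [a] \<le> [b] iff the negative part (b - a)^- = (a - b) \<or> 0 lies in I.\<close>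
definition quot_le :: "'a::{comm_ring_1, ordered_ab_group_add, lattice} set \<Rightarrow> 'a \<Rightarrow> 'a \<Rightarrow> bool" where
  "quot_le I a b \<longleftrightarrow> sup (a - b) 0 \<in> I"

text \<open>I is archimedean iff A/I is archimedean.\<close>
definition archimedean_l_ideal :: "'a::{comm_ring_1, ordered_ab_group_add, lattice} set \<Rightarrow> bool" where
  "archimedean_l_ideal I \<longleftrightarrow> l_ideal I \<and>
     (\<forall>a b. (\<forall>n::nat. n \<ge> 1 \<longrightarrow> quot_le I (of_nat n * a) b) \<longrightarrow> quot_le I a 0)"

definition maximal_l_ideal :: "'a::{comm_ring_1, ordered_ab_group_add, lattice} set \<Rightarrow> bool" where
  "maximal_l_ideal I \<longleftrightarrow> l_ideal I \<and> I \<noteq> UNIV \<and>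
     (\<forall>J. l_ideal J \<and> J \<noteq> UNIV \<and> I \<subseteq> J \<longrightarrow> J = I)"

definition arch_spec :: "'a::{comm_ring_1, ordered_ab_group_add, lattice} itself \<Rightarrow> 'a set set" where
  "arch_spec _ = {I. l_ideal I \<and> I \<noteq> UNIV \<and> archimedean_l_ideal I}"

definition max_spec :: "'a::{comm_ring_1, ordered_ab_group_add, lattice} itself \<Rightarrow> 'a set set" where
  "max_spec _ = {I. maximal_l_ideal I}"

definition alexandroff_topology :: "'b set set \<Rightarrow> 'b set topology" where
  "alexandroff_topology X = topology (\<lambda>U. U \<subseteq> X \<and> (\<forall>u\<in>U. \<forall>v\<in>X. u \<subseteq> v \<longrightarrow> v \<in> U))"

definition Bset :: "'x set \<Rightarrow> ('x \<Rightarrow> real) set" where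
  "Bset S = {f. (\<exists>c. \<forall>x\<in>S. \<bar>f x\<bar> \<le> c) \<and> (\<forall>x. x \<notin> S \<longrightarrow> f x = 0)}"

definition Bfun :: "'x topology \<Rightarrow> ('x \<Rightarrow> real) set" where
  "Bfun T = Bset (topspace T)"

definition lower_fun :: "'x topology \<Rightarrow> ('x \<Rightarrow> real) \<Rightarrow> 'x \<Rightarrow> real" where
  "lower_fun T f x = Sup ((\<lambda>U. Inf (f ` U)) ` {U. openin T U \<and> x \<in> U})"

definition upper_fun :: "'x topology \<Rightarrow> ('x \<Rightarrow> real) \<Rightarrow> 'x \<Rightarrow> real" where
  "upper_fun T f x = Inf ((\<lambda>U. Sup (f ` U)) ` {U. openin T U \<and> x \<in> U})"

text \<open>f^# = (f^*)_*, extended by 0 outside the space.\<close>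
definition normalize :: "'x topology \<Rightarrow> ('x \<Rightarrow> real) \<Rightarrow> 'x \<Rightarrow> real" where
  "normalize T f = (\<lambda>x. if x \<in> topspace T then lower_fun T (upper_fun T f) x else 0)"

definition Nfun :: "'x topology \<Rightarrow> ('x \<Rightarrow> real) set" where
  "Nfun T = {f \<in> Bfun T. normalize T f = f}"

text \<open>A ba\<ell>-isomorphism psi : N(T) \<rightarrow> B(Y): a bijection preserving the unit and the
  ba\<ell>-operations of N(T) (normalizations of the pointwise operations)
  and the pointwise operations of B(Y).\<close>
definition bal_iso_N_B :: "'x topology \<Rightarrow> 'y set \<Rightarrow> (('x \<Rightarrow> real) \<Rightarrow> ('y \<Rightarrow> real)) \<Rightarrow> bool" where
  "bal_iso_N_B T Y \<psi> \<longleftrightarrow>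
     bij_betw \<psi> (Nfun T) (Bset Y) \<and>
     \<psi> (\<lambda>x. if x \<in> topspace T then 1 else 0) = (\<lambda>y. if y \<in> Y then 1 else 0) \<and>
     (\<forall>f\<in>Nfun T. \<forall>g\<in>Nfun T.
        \<psi> (normalize T (\<lambda>x. f x + g x)) = (\<lambda>y. \<psi> f y + \<psi> g y) \<and>
        \<psi> (normalize T (\<lambda>x. f x * g x)) = (\<lambda>y. \<psi> f y * \<psi> g y) \<and>
        \<psi> (normalize T (\<lambda>x. max (f x) (g x))) = (\<lambda>y. max (\<psi> f y) (\<psi> g y)) \<and>
        \<psi> (normalize T (\<lambda>x. min (f x) (g x))) = (\<lambda>y. min (\<psi> f y) (\<psi> g y))) \<and>
     (\<forall>f\<in>Nfun T. \<forall>r::real. \<psi> (normalize T (\<lambda>x. r * f x)) = (\<lambda>y. r * \<psi> f y))"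

definition restrict_to :: "'y set \<Rightarrow> ('y \<Rightarrow> real) \<Rightarrow> 'y \<Rightarrow> real" where
  "restrict_to Y f = (\<lambda>y. if y \<in> Y then f y else 0)"

end

theory Submission
  imports Defs
begin

(* In the Alexandroff topology on X the smallest open neighbourhood of x is its upset, so for bounded h
   we get h^#(x) = inf over y >= x of sup over z >= y of h(z). Every proper l-ideal lies in a maximal one
   (Zorn), and maximal l-ideals are archimedean, so Y_A is a cofinal set of maximal points of X. For such a
   set the formula collapses to h^#(x) = inf {h(m) | m in Y_A, x <= m}: a normal function is determined by
   its restriction to Y_A, every bounded function on Y_A extends to a normal one by this infimum, and
   normalization does not change values on Y_A, which makes restriction preserve the operations. *)

section \<open>The Alexandroff topology of an inclusion order\<close>

definition upset_of :: "'b set set \<Rightarrow> 'b set \<Rightarrow> 'b set set" where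
  "upset_of X x = {z \<in> X. x \<subseteq> z}"

lemma openin_alexandroff_topology:
  "openin (alexandroff_topology X) U \<longleftrightarrow> U \<subseteq> X \<and> (\<forall>u\<in>U. \<forall>v\<in>X. u \<subseteq> v \<longrightarrow> v \<in> U)"
proof -
  have "istopology (\<lambda>U. U \<subseteq> X \<and> (\<forall>u\<in>U. \<forall>v\<in>X. u \<subseteq> v \<longrightarrow> v \<in> U))"
    unfolding istopology_def by blast
  then show ?thesis
    unfolding alexandroff_topology_def by (simp add: topology_inverse')
qed

lemma topspace_alexandroff_topology [simp]: "topspace (alexandroff_topology X) = X"
  unfolding topspace_def openin_alexandroff_topology by blast

lemma openin_upset_of: "openin (alexandroff_topology X) (upset_of X x)"
  unfolding openin_alexandroff_topology upset_of_def by blast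

lemma upset_of_subset_openin:
  "openin (alexandroff_topology X) U \<Longrightarrow> x \<in> U \<Longrightarrow> upset_of X x \<subseteq> U"
  unfolding openin_alexandroff_topology upset_of_def by blast

lemma self_in_upset_of: "x \<in> X \<Longrightarrow> x \<in> upset_of X x"
  unfolding upset_of_def by blast

lemma upset_of_subset: "upset_of X x \<subseteq> X"
  unfolding upset_of_def by blast

lemma upper_fun_alexandroff:
  assumes "x \<in> X" and "bdd_above (h ` X)"
  shows "upper_fun (alexandroff_topology X) h x = Sup (h ` upset_of X x)"
  unfolding upper_fun_def
proof (rule cInf_eq_minimum)
  show "Sup (h ` upset_of X x) \<in> (\<lambda>U. Sup (h ` U)) ` {U. openin (alexandroff_topology X) U \<and> x \<in> U}"
    using openin_upset_of self_in_upset_of[OF \<open>x \<in> X\<close>] by blast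
next
  fix s assume "s \<in> (\<lambda>U. Sup (h ` U)) ` {U. openin (alexandroff_topology X) U \<and> x \<in> U}"
  then obtain U where U: "openin (alexandroff_topology X) U" "x \<in> U" and s: "s = Sup (h ` U)"
    by blast
  have "U \<subseteq> X"
    using U(1) openin_alexandroff_topology by blast
  then show "Sup (h ` upset_of X x) \<le> s"
    unfolding s using assms upset_of_subset_openin[OF U] self_in_upset_of[OF \<open>x \<in> X\<close>]
    by (intro cSup_subset_mono) (auto intro: bdd_above_mono[OF _ image_mono])
qed

lemma lower_fun_alexandroff:
  assumes "x \<in> X" and "bdd_below (g ` X)"
  shows "lower_fun (alexandroff_topology X) g x = Inf (g ` upset_of X x)"
  unfolding lower_fun_def
proof (rule cSup_eq_maximum)
  show "Inf (g ` upset_of X x) \<in> (\<lambda>U. Inf (g ` U)) ` {U. openin (alexandroff_topology X) U \<and> x \<in> U}"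
    using openin_upset_of self_in_upset_of[OF \<open>x \<in> X\<close>] by blast
next
  fix s assume "s \<in> (\<lambda>U. Inf (g ` U)) ` {U. openin (alexandroff_topology X) U \<and> x \<in> U}"
  then obtain U where U: "openin (alexandroff_topology X) U" "x \<in> U" and s: "s = Inf (g ` U)"
    by blast
  have "U \<subseteq> X"
    using U(1) openin_alexandroff_topology by blast
  then show "s \<le> Inf (g ` upset_of X x)"
    unfolding s using assms upset_of_subset_openin[OF U] self_in_upset_of[OF \<open>x \<in> X\<close>]
    by (intro cInf_superset_mono) (auto intro: bdd_below_mono[OF _ image_mono])
qed

lemma normalize_alexandroff:
  assumes "x \<in> X" and h: "bounded (h ` X)"
  shows "normalize (alexandroff_topology X) h x = Inf ((\<lambda>y. Sup (h ` upset_of X y)) ` upset_of X x)"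
proof -
  let ?T = "alexandroff_topology X"
  have above: "bdd_above (h ` upset_of X y)" for y
    using bdd_above_mono[OF bounded_imp_bdd_above[OF h] image_mono[OF upset_of_subset]] .
  have upper: "upper_fun ?T h y = Sup (h ` upset_of X y)" if "y \<in> X" for y
    using upper_fun_alexandroff[OF that bounded_imp_bdd_above[OF h]] .
  obtain m where m: "\<And>y. y \<in> X \<Longrightarrow> m \<le> h y"
    using bounded_imp_bdd_below[OF h] by (auto simp: bdd_below_def)
  have "m \<le> upper_fun ?T h y" if "y \<in> X" for y
    using m[OF that] cSup_upper[OF imageI[OF self_in_upset_of[OF that]] above] upper[OF that]
    by linarith
  then have "bdd_below (upper_fun ?T h ` X)"
    by (intro bdd_belowI2[where m=m])
  then have "normalize ?T h x = Inf (upper_fun ?T h ` upset_of X x)"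
    unfolding normalize_def using assms lower_fun_alexandroff by simp
  also have "\<dots> = Inf ((\<lambda>y. Sup (h ` upset_of X y)) ` upset_of X x)"
    using upper upset_of_subset by (metis (no_types, lifting) image_cong subsetD)
  finally show ?thesis .
qed

section \<open>Normal functions determined by cofinal maximal points\<close>

lemma Bset_iff: "f \<in> Bset S \<longleftrightarrow> bounded (f ` S) \<and> (\<forall>x. x \<notin> S \<longrightarrow> f x = 0)"
  unfolding Bset_def bounded_real by blast

lemma bounded_image_Bset: "f \<in> Bset S \<Longrightarrow> bounded (f ` S)"
  unfolding Bset_iff by blast

lemma Nfun_alexandroff_topology:
  "f \<in> Nfun (alexandroff_topology X) \<longleftrightarrow> f \<in> Bset X \<and> normalize (alexandroff_topology X) f = f"
  unfolding Nfun_def Bfun_def by simp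

lemma bounded_pointwise:
  fixes F :: "real \<Rightarrow> real \<Rightarrow> real"
  assumes "bounded (f ` S)" and "bounded (g ` S)"
    and F: "\<And>C. \<exists>D. \<forall>u v. \<bar>u\<bar> \<le> C \<longrightarrow> \<bar>v\<bar> \<le> C \<longrightarrow> \<bar>F u v\<bar> \<le> D"
  shows "bounded ((\<lambda>x. F (f x) (g x)) ` S)"
proof -
  obtain Cf Cg where "\<forall>x\<in>S. \<bar>f x\<bar> \<le> Cf" and "\<forall>x\<in>S. \<bar>g x\<bar> \<le> Cg"
    using assms(1,2) unfolding bounded_real by auto
  then have "\<forall>x\<in>S. \<bar>f x\<bar> \<le> max Cf Cg \<and> \<bar>g x\<bar> \<le> max Cf Cg"
    by fastforce
  moreover obtain D where "\<forall>u v. \<bar>u\<bar> \<le> max Cf Cg \<longrightarrow> \<bar>v\<bar> \<le> max Cf Cg \<longrightarrow> \<bar>F u v\<bar> \<le> D"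
    using F by blast
  ultimately show ?thesis
    unfolding bounded_real by blast
qed

locale cofinal_maxima =
  fixes X Y :: "'b set set"
  assumes maxima_subset: "Y \<subseteq> X"
    and exists_maximum_above: "\<And>x. x \<in> X \<Longrightarrow> \<exists>m\<in>Y. x \<subseteq> m"
    and maxima_maximal: "\<And>m z. m \<in> Y \<Longrightarrow> z \<in> X \<Longrightarrow> m \<subseteq> z \<Longrightarrow> z = m"
begin

lemma maxima_above_nonempty: "x \<in> X \<Longrightarrow> Y \<inter> upset_of X x \<noteq> {}"
  using exists_maximum_above maxima_subset unfolding upset_of_def by blast

lemma maxima_above_maximum: "m \<in> Y \<Longrightarrow> Y \<inter> upset_of X m = {m}"
  using maxima_subset maxima_maximal unfolding upset_of_def by blast

lemma normalize_eq_Inf_maxima: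
  assumes x: "x \<in> X" and h: "bounded (h ` X)"
  shows "normalize (alexandroff_topology X) h x = Inf (h ` (Y \<inter> upset_of X x))"
proof -
  let ?S = "(\<lambda>y. Sup (h ` upset_of X y)) ` upset_of X x"
  let ?R = "h ` (Y \<inter> upset_of X x)"
  have above: "bdd_above (h ` upset_of X y)" for y
    using bdd_above_mono[OF bounded_imp_bdd_above[OF h] image_mono[OF upset_of_subset]] .
  have R_below: "bdd_below ?R"
    using upset_of_subset by (intro bdd_below_mono[OF bounded_imp_bdd_below[OF h]] image_mono) blast
  obtain c where c: "\<And>y. y \<in> X \<Longrightarrow> c \<le> h y"
    using bounded_imp_bdd_below[OF h] by (auto simp: bdd_below_def)
  have "c \<le> Sup (h ` upset_of X y)" if "y \<in> upset_of X x" for y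
  proof -
    have "y \<in> X"
      using that upset_of_subset by blast
    then have "h y \<le> Sup (h ` upset_of X y)"
      using above self_in_upset_of by (intro cSup_upper) auto
    with c[OF \<open>y \<in> X\<close>] show ?thesis
      by linarith
  qed
  then have S_below: "bdd_below ?S"
    by (intro bdd_belowI2[where m=c])
  have "Inf ?R \<le> Inf ?S"
  proof (rule cInf_mono[OF _ R_below])
    show "?S \<noteq> {}"
      using self_in_upset_of[OF x] by blast
  next
    fix s assume "s \<in> ?S"
    then obtain y where y: "y \<in> upset_of X x" and s: "s = Sup (h ` upset_of X y)"
      by blast
    obtain m where "m \<in> Y" and "y \<subseteq> m"
      using exists_maximum_above y upset_of_subset by blast
    then have my: "m \<in> upset_of X y" and "m \<in> Y \<inter> upset_of X x"
      using y maxima_subset unfolding upset_of_def by auto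
    moreover have "h m \<le> s"
      unfolding s using my above by (intro cSup_upper) auto
    ultimately show "\<exists>r\<in>?R. r \<le> s"
      by blast
  qed
  moreover have "Inf ?S \<le> Inf ?R"
  proof (rule cInf_superset_mono[OF _ S_below])
    show "?R \<noteq> {}"
      using maxima_above_nonempty[OF x] by blast
    show "?R \<subseteq> ?S"
    proof
      fix r assume "r \<in> ?R"
      then obtain m where m: "m \<in> Y" "m \<in> upset_of X x" and r: "r = h m"
        by blast
      have "upset_of X m = {m}"
        using maxima_maximal[OF m(1)] m(1) maxima_subset unfolding upset_of_def by blast
      then have "r = Sup (h ` upset_of X m)"
        using r by simp
      then show "r \<in> ?S"
        using m(2) by blast
    qed
  qed
  ultimately show ?thesis
    using normalize_alexandroff[OF x h] by simp
qed

lemma normalize_at_maximum: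
  assumes "m \<in> Y" and "bounded (h ` X)"
  shows "normalize (alexandroff_topology X) h m = h m"
proof -
  have "m \<in> X"
    using assms(1) maxima_subset by blast
  then show ?thesis
    using normalize_eq_Inf_maxima[OF _ assms(2)] maxima_above_maximum[OF assms(1)] by simp
qed

lemma restrict_to_normalize:
  assumes "bounded (h ` X)"
  shows "restrict_to Y (normalize (alexandroff_topology X) h) = restrict_to Y h"
  unfolding restrict_to_def using normalize_at_maximum[OF _ assms] by (simp add: fun_eq_iff)

lemma Nfun_eq_Inf_maxima:
  assumes "f \<in> Nfun (alexandroff_topology X)" and "x \<in> X"
  shows "f x = Inf (f ` (Y \<inter> upset_of X x))"
proof -
  have "f \<in> Bset X" and "normalize (alexandroff_topology X) f = f"
    using assms(1) unfolding Nfun_alexandroff_topology by auto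
  with normalize_eq_Inf_maxima[OF assms(2) bounded_image_Bset[OF \<open>f \<in> Bset X\<close>]]
  show ?thesis
    by simp
qed

lemma inj_on_restrict_to_Nfun: "inj_on (restrict_to Y) (Nfun (alexandroff_topology X))"
proof (rule inj_onI)
  fix f g
  assume f: "f \<in> Nfun (alexandroff_topology X)" and g: "g \<in> Nfun (alexandroff_topology X)"
    and fg_Y: "restrict_to Y f = restrict_to Y g"
  have fg: "f m = g m" if "m \<in> Y" for m
    using fun_cong[OF fg_Y, of m] that by (simp add: restrict_to_def)
  show "f = g"
  proof
    fix x
    show "f x = g x"
    proof (cases "x \<in> X")
      case True
      have "f ` (Y \<inter> upset_of X x) = g ` (Y \<inter> upset_of X x)"
        using fg by (intro image_cong) auto
      then show ?thesis
        using Nfun_eq_Inf_maxima[OF f True] Nfun_eq_Inf_maxima[OF g True] by simp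
    next
      case False
      then show ?thesis
        using f g by (simp add: Nfun_alexandroff_topology Bset_iff)
    qed
  qed
qed

definition extend_from_maxima :: "('b set \<Rightarrow> real) \<Rightarrow> 'b set \<Rightarrow> real" where
  "extend_from_maxima g x = (if x \<in> X then Inf (g ` (Y \<inter> upset_of X x)) else 0)"

lemma extend_from_maxima_at_maximum:
  assumes "m \<in> Y"
  shows "extend_from_maxima g m = g m"
proof -
  have "m \<in> X"
    using assms maxima_subset by blast
  then show ?thesis
    unfolding extend_from_maxima_def maxima_above_maximum[OF assms] by simp
qed

lemma bounded_extend_from_maxima:
  assumes "bounded (g ` Y)"
  shows "bounded (extend_from_maxima g ` X)"
proof -
  obtain C where C: "\<And>m. m \<in> Y \<Longrightarrow> \<bar>g m\<bar> \<le> C"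
    using assms unfolding bounded_real by blast
  have "\<bar>extend_from_maxima g x\<bar> \<le> C" if x: "x \<in> X" for x
  proof -
    let ?G = "g ` (Y \<inter> upset_of X x)"
    have G_bounds: "- C \<le> r \<and> r \<le> C" if "r \<in> ?G" for r
    proof -
      obtain m where "m \<in> Y" and "r = g m"
        using \<open>r \<in> ?G\<close> by blast
      then show ?thesis
        using C[of m] by linarith
    qed
    have "?G \<noteq> {}"
      using maxima_above_nonempty[OF x] by blast
    then obtain r where r: "r \<in> ?G"
      by blast
    have "bdd_below ?G"
      using G_bounds by (intro bdd_belowI[where m="- C"]) blast
    then have "Inf ?G \<le> C"
      using cInf_lower[OF r] G_bounds[OF r] by linarith
    moreover have "- C \<le> Inf ?G"
      using \<open>?G \<noteq> {}\<close> G_bounds by (intro cInf_greatest) blast+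
    ultimately show ?thesis
      using x unfolding extend_from_maxima_def by simp
  qed
  then show ?thesis
    unfolding bounded_real by blast
qed

lemma extend_from_maxima_in_Nfun:
  assumes "bounded (g ` Y)"
  shows "extend_from_maxima g \<in> Nfun (alexandroff_topology X)"
proof -
  have "normalize (alexandroff_topology X) (extend_from_maxima g) x = extend_from_maxima g x" for x
  proof (cases "x \<in> X")
    case True
    have "extend_from_maxima g ` (Y \<inter> upset_of X x) = g ` (Y \<inter> upset_of X x)"
      by (intro image_cong) (auto simp: extend_from_maxima_at_maximum)
    then show ?thesis
      using normalize_eq_Inf_maxima[OF True bounded_extend_from_maxima[OF assms]] True
      by (simp add: extend_from_maxima_def)
  next
    case False
    then show ?thesis
      by (simp add: normalize_def extend_from_maxima_def)
  qed
  moreover have "extend_from_maxima g \<in> Bset X"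
    unfolding Bset_iff using bounded_extend_from_maxima[OF assms] by (simp add: extend_from_maxima_def)
  ultimately show ?thesis
    unfolding Nfun_alexandroff_topology by blast
qed

lemma restrict_to_Nfun_image: "restrict_to Y ` Nfun (alexandroff_topology X) = Bset Y"
proof
  show "restrict_to Y ` Nfun (alexandroff_topology X) \<subseteq> Bset Y"
  proof
    fix u assume "u \<in> restrict_to Y ` Nfun (alexandroff_topology X)"
    then obtain f where f: "f \<in> Bset X" and u: "u = restrict_to Y f"
      using Nfun_alexandroff_topology by blast
    have "u ` Y = f ` Y"
      unfolding u restrict_to_def by simp
    then have "bounded (u ` Y)"
      using bounded_subset[OF bounded_image_Bset[OF f]] maxima_subset by (metis image_mono)
    then show "u \<in> Bset Y"
      unfolding Bset_iff u restrict_to_def by simp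
  qed
next
  show "Bset Y \<subseteq> restrict_to Y ` Nfun (alexandroff_topology X)"
  proof
    fix g assume g: "g \<in> Bset Y"
    then have "restrict_to Y (extend_from_maxima g) = g"
      unfolding restrict_to_def Bset_def by (auto simp: extend_from_maxima_at_maximum)
    then show "g \<in> restrict_to Y ` Nfun (alexandroff_topology X)"
      using extend_from_maxima_in_Nfun[OF bounded_image_Bset[OF g]] by (metis imageI)
  qed
qed

lemma restrict_to_normalize_pointwise:
  fixes F :: "real \<Rightarrow> real \<Rightarrow> real"
  assumes "f \<in> Nfun (alexandroff_topology X)" and "g \<in> Nfun (alexandroff_topology X)"
    and "F 0 0 = 0" and "\<And>C. \<exists>D. \<forall>u v. \<bar>u\<bar> \<le> C \<longrightarrow> \<bar>v\<bar> \<le> C \<longrightarrow> \<bar>F u v\<bar> \<le> D"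
  shows "restrict_to Y (normalize (alexandroff_topology X) (\<lambda>x. F (f x) (g x)))
    = (\<lambda>y. F (restrict_to Y f y) (restrict_to Y g y))"
proof -
  have "f \<in> Bset X" and "g \<in> Bset X"
    using assms(1,2) Nfun_alexandroff_topology by blast+
  then have "bounded ((\<lambda>x. F (f x) (g x)) ` X)"
    using bounded_pointwise[OF bounded_image_Bset bounded_image_Bset assms(4)] by blast
  then have "restrict_to Y (normalize (alexandroff_topology X) (\<lambda>x. F (f x) (g x)))
      = restrict_to Y (\<lambda>x. F (f x) (g x))"
    by (rule restrict_to_normalize)
  also have "\<dots> = (\<lambda>y. F (restrict_to Y f y) (restrict_to Y g y))"
    using assms(3) by (simp add: restrict_to_def fun_eq_iff)
  finally show ?thesis .
qed

theorem bal_iso_restrict_to: "bal_iso_N_B (alexandroff_topology X) Y (restrict_to Y)"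
proof -
  have sum: "\<exists>D. \<forall>u v. \<bar>u\<bar> \<le> C \<longrightarrow> \<bar>v\<bar> \<le> C \<longrightarrow> \<bar>u + v\<bar> \<le> D" for C :: real
    by (intro exI[of _ "C + C"]) auto
  have product: "\<exists>D. \<forall>u v. \<bar>u\<bar> \<le> C \<longrightarrow> \<bar>v\<bar> \<le> C \<longrightarrow> \<bar>u * v\<bar> \<le> D" for C :: real
    by (intro exI[of _ "C * C"]) (auto simp: abs_mult intro!: mult_mono)
  have maximum: "\<exists>D. \<forall>u v. \<bar>u\<bar> \<le> C \<longrightarrow> \<bar>v\<bar> \<le> C \<longrightarrow> \<bar>max u v\<bar> \<le> D" for C :: real
    by (intro exI[of _ C]) auto
  have minimum: "\<exists>D. \<forall>u v. \<bar>u\<bar> \<le> C \<longrightarrow> \<bar>v\<bar> \<le> C \<longrightarrow> \<bar>min u v\<bar> \<le> D" for C :: real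
    by (intro exI[of _ C]) auto
  have scaling: "\<exists>D. \<forall>u v::real. \<bar>u\<bar> \<le> C \<longrightarrow> \<bar>v\<bar> \<le> C \<longrightarrow> \<bar>r * u\<bar> \<le> D" for C r :: real
    by (intro exI[of _ "\<bar>r\<bar> * C"]) (auto simp: abs_mult intro!: mult_left_mono)
  have unit: "restrict_to Y (\<lambda>x. if x \<in> topspace (alexandroff_topology X) then 1 else 0)
      = (\<lambda>y. if y \<in> Y then 1 else 0)"
    using maxima_subset by (auto simp: restrict_to_def fun_eq_iff)
  show ?thesis
    unfolding bal_iso_N_B_def bij_betw_def
  proof (intro conjI ballI allI)
    fix f g
    assume f: "f \<in> Nfun (alexandroff_topology X)" and g: "g \<in> Nfun (alexandroff_topology X)"
    show "restrict_to Y (normalize (alexandroff_topology X) (\<lambda>x. f x + g x))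
        = (\<lambda>y. restrict_to Y f y + restrict_to Y g y)"
      using restrict_to_normalize_pointwise[where F="\<lambda>u v. u + v", OF f g _ sum] by simp
    show "restrict_to Y (normalize (alexandroff_topology X) (\<lambda>x. f x * g x))
        = (\<lambda>y. restrict_to Y f y * restrict_to Y g y)"
      using restrict_to_normalize_pointwise[where F="\<lambda>u v. u * v", OF f g _ product] by simp
    show "restrict_to Y (normalize (alexandroff_topology X) (\<lambda>x. max (f x) (g x)))
        = (\<lambda>y. max (restrict_to Y f y) (restrict_to Y g y))"
      using restrict_to_normalize_pointwise[where F=max, OF f g _ maximum] by simp
    show "restrict_to Y (normalize (alexandroff_topology X) (\<lambda>x. min (f x) (g x)))
        = (\<lambda>y. min (restrict_to Y f y) (restrict_to Y g y))"
      using restrict_to_normalize_pointwise[where F=min, OF f g _ minimum] by simp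
  next
    fix f r
    assume f: "f \<in> Nfun (alexandroff_topology X)"
    show "restrict_to Y (normalize (alexandroff_topology X) (\<lambda>x. r * f x)) = (\<lambda>y. r * restrict_to Y f y)"
      using restrict_to_normalize_pointwise[where F="\<lambda>u v. r * u", OF f f _ scaling] by simp
  qed (use inj_on_restrict_to_Nfun restrict_to_Nfun_image unit in auto)
qed

end

section \<open>\<open>\<ell>\<close>-ideals\<close>

lemma labs_ge_self: "x \<le> labs x"
  unfolding labs_def by simp

lemma labs_ge_minus: "- x \<le> labs x"
  unfolding labs_def by simp

lemma labs_of_nonneg: "0 \<le> x \<Longrightarrow> labs x = x"
  unfolding labs_def by (rule sup_absorb1) (meson neg_le_0_iff_le order_trans)

lemma labs_add_le: "labs (x + y) \<le> labs x + labs y"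
proof -
  have "x + y \<le> labs x + labs y"
    by (rule add_mono[OF labs_ge_self labs_ge_self])
  moreover have "- (x + y) \<le> labs x + labs y"
    using add_mono[OF labs_ge_minus[of x] labs_ge_minus[of y]] by simp
  ultimately show ?thesis
    unfolding labs_def[of "x + y"] by simp
qed

lemma l_ideal_add: "l_ideal I \<Longrightarrow> x \<in> I \<Longrightarrow> y \<in> I \<Longrightarrow> x + y \<in> I"
  unfolding l_ideal_def by blast

lemma l_ideal_mult: "l_ideal I \<Longrightarrow> y \<in> I \<Longrightarrow> a * y \<in> I"
  unfolding l_ideal_def by blast

lemma l_ideal_solid: "l_ideal I \<Longrightarrow> y \<in> I \<Longrightarrow> labs x \<le> labs y \<Longrightarrow> x \<in> I"
  unfolding l_ideal_def by blast

lemma l_ideal_scaleR: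
  fixes I :: "'a::{comm_ring_1, real_algebra_1, ordered_ab_group_add, lattice} set"
  shows "l_ideal I \<Longrightarrow> x \<in> I \<Longrightarrow> r *\<^sub>R x \<in> I"
  unfolding scaleR_conv_of_real by (rule l_ideal_mult)

lemma l_ideal_nonneg_le: "l_ideal I \<Longrightarrow> y \<in> I \<Longrightarrow> 0 \<le> x \<Longrightarrow> x \<le> y \<Longrightarrow> x \<in> I"
  by (rule l_ideal_solid) (auto simp: labs_of_nonneg intro: order_trans[OF _ labs_ge_self])

lemma one_in_l_ideal_iff:
  fixes I :: "'a::{comm_ring_1, ordered_ab_group_add, lattice} set"
  assumes "l_ideal I"
  shows "1 \<in> I \<longleftrightarrow> I = UNIV"
proof
  assume "1 \<in> I"
  then have "a \<in> I" for a
    using l_ideal_mult[OF assms, of 1 a] by simp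
  then show "I = UNIV"
    by blast
qed simp

lemma l_ideal_Union_chain:
  assumes "C \<noteq> {}" and "\<And>I. I \<in> C \<Longrightarrow> l_ideal I" and "\<And>I J. I \<in> C \<Longrightarrow> J \<in> C \<Longrightarrow> I \<subseteq> J \<or> J \<subseteq> I"
  shows "l_ideal (\<Union>C)"
  unfolding l_ideal_def
proof (intro conjI ballI allI impI)
  show "0 \<in> \<Union>C"
    using assms(1,2) unfolding l_ideal_def by blast
next
  fix x y assume "x \<in> \<Union>C" and "y \<in> \<Union>C"
  then obtain I J where I: "I \<in> C" "x \<in> I" and J: "J \<in> C" "y \<in> J"
    by blast
  show "x + y \<in> \<Union>C"
  proof (cases "I \<subseteq> J")
    case True
    then have "x + y \<in> J"
      using I J assms(2)[OF J(1)] l_ideal_add by blast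
    then show ?thesis
      using J(1) by blast
  next
    case False
    then have "x + y \<in> I"
      using I J assms(2)[OF I(1)] assms(3)[OF I(1) J(1)] l_ideal_add by blast
    then show ?thesis
      using I(1) by blast
  qed
next
  fix a y assume "y \<in> \<Union>C"
  then show "a * y \<in> \<Union>C"
    using assms(2) l_ideal_mult by blast
next
  fix x y assume "y \<in> \<Union>C \<and> labs x \<le> labs y"
  then show "x \<in> \<Union>C"
    using assms(2) l_ideal_solid by blast
qed

lemma exists_maximal_l_ideal:
  fixes I :: "'a::{comm_ring_1, ordered_ab_group_add, lattice} set"
  assumes "l_ideal I" and "I \<noteq> UNIV"
  shows "\<exists>M. maximal_l_ideal M \<and> I \<subseteq> M"
proof -
  \<comment> \<open>\<open>1 \<notin> J\<close> rather than \<open>J \<noteq> UNIV\<close>, so that the family is closed under unions of chains\<close>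
  let ?F = "{J. l_ideal J \<and> 1 \<notin> J \<and> I \<subseteq> J}"
  have "\<exists>M\<in>?F. \<forall>J\<in>?F. M \<subseteq> J \<longrightarrow> J = M"
  proof (rule subset_Zorn_nonempty)
    have "1 \<notin> I"
      using one_in_l_ideal_iff[OF assms(1)] assms(2) by simp
    then show "?F \<noteq> {}"
      using assms(1) by blast
  next
    fix C assume "C \<noteq> {}" and "subset.chain ?F C"
    then have CF: "C \<subseteq> ?F" and "\<forall>I\<in>C. \<forall>J\<in>C. I \<subseteq> J \<or> J \<subseteq> I"
      unfolding subset.chain_def by blast+
    then have "l_ideal (\<Union>C)"
      by (intro l_ideal_Union_chain[OF \<open>C \<noteq> {}\<close>]) blast+
    then show "\<Union>C \<in> ?F"
      using CF \<open>C \<noteq> {}\<close> by blast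
  qed
  then obtain M where M: "M \<in> ?F" and M_max: "\<And>J. J \<in> ?F \<Longrightarrow> M \<subseteq> J \<Longrightarrow> J = M"
    by auto
  have "maximal_l_ideal M"
    unfolding maximal_l_ideal_def
  proof (intro conjI allI impI)
    show "l_ideal M" and "M \<noteq> UNIV"
      using M by auto
    fix J assume J: "l_ideal J \<and> J \<noteq> UNIV \<and> M \<subseteq> J"
    then have "J \<in> ?F"
      using M one_in_l_ideal_iff[of J] by auto
    then show "J = M"
      using M_max J by blast
  qed
  with M show ?thesis
    by blast
qed

section \<open>Maximal \<open>\<ell>\<close>-ideals of a ba\<open>\<ell>\<close>-algebra are archimedean\<close>

context
  fixes A :: "'a::{comm_ring_1, real_algebra_1, ordered_ab_group_add, lattice} itself"
  assumes bal: "bal_algebra A"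
begin

lemma bal_mult_nonneg: "0 \<le> a \<Longrightarrow> 0 \<le> b \<Longrightarrow> 0 \<le> a * (b::'a)"
  using bal unfolding bal_algebra_def by blast

lemma bal_scaleR_nonneg: "0 \<le> r \<Longrightarrow> 0 \<le> a \<Longrightarrow> 0 \<le> r *\<^sub>R (a::'a)"
  using bal unfolding bal_algebra_def by blast

lemma bal_scaleR_left_mono: "0 \<le> r \<Longrightarrow> x \<le> y \<Longrightarrow> r *\<^sub>R x \<le> r *\<^sub>R (y::'a)"
  using bal_scaleR_nonneg[of r "y - x"] by (simp add: scaleR_diff_right)

lemma bal_mult_left_mono: "0 \<le> p \<Longrightarrow> x \<le> y \<Longrightarrow> p * x \<le> p * (y::'a)"
  using bal_mult_nonneg[of p "y - x"] by (simp add: right_diff_distrib)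

lemma bal_labs_nonneg: "0 \<le> labs (x::'a)"
proof -
  have "x + - x \<le> labs x + labs x"
    by (rule add_mono[OF labs_ge_self labs_ge_minus])
  then have "0 \<le> 2 *\<^sub>R labs x"
    by (simp add: scaleR_2)
  then have "0 \<le> (1/2) *\<^sub>R (2 *\<^sub>R labs x)"
    by (rule bal_scaleR_nonneg[rotated]) simp
  then show ?thesis
    by simp
qed

lemma bal_labs_le_scaleR_one: "\<exists>N\<ge>0. labs (a::'a) \<le> N *\<^sub>R 1"
proof -
  obtain n :: nat where "labs a \<le> of_nat n"
    using bal unfolding bal_algebra_def by blast
  then show ?thesis
    by (intro exI[of _ "real n"]) (simp add: scaleR_conv_of_real)
qed

lemma bal_labs_mult_le:
  assumes N: "0 \<le> N" and a: "labs a \<le> N *\<^sub>R 1"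
  shows "labs (a * x) \<le> (3 * N) *\<^sub>R labs (x::'a)"
proof -
  \<comment> \<open>multiplication is only known to be monotone in nonnegative factors, so shift \<open>a\<close> into \<open>[0, 2N]\<close>\<close>
  define p where "p = a + N *\<^sub>R 1"
  define t where "t = labs x"
  have "- a \<le> N *\<^sub>R 1"
    using order_trans[OF labs_ge_minus a] .
  then have p_nonneg: "0 \<le> p"
    using add_right_mono[of "- a" "N *\<^sub>R 1" a] unfolding p_def by (simp add: add.commute)
  have "p \<le> N *\<^sub>R 1 + N *\<^sub>R 1"
    unfolding p_def by (rule add_right_mono[OF order_trans[OF labs_ge_self a]])
  then have "0 \<le> ((2 * N) *\<^sub>R 1 - p) * t"
    unfolding t_def by (intro bal_mult_nonneg bal_labs_nonneg) (simp add: scaleR_left_distrib[symmetric])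
  then have pt: "p * t \<le> (2 * N) *\<^sub>R t"
    by (simp add: left_diff_distrib)
  have px: "p * x \<le> (2 * N) *\<^sub>R t" and minus_px: "- (p * x) \<le> (2 * N) *\<^sub>R t"
    using bal_mult_left_mono[OF p_nonneg labs_ge_self[of x]]
      bal_mult_left_mono[OF p_nonneg labs_ge_minus[of x]] pt
    unfolding t_def by (simp_all add: order_trans)
  have Nx: "N *\<^sub>R x \<le> N *\<^sub>R t" and minus_Nx: "- (N *\<^sub>R x) \<le> N *\<^sub>R t"
    using bal_scaleR_left_mono[OF N labs_ge_self[of x]] bal_scaleR_left_mono[OF N labs_ge_minus[of x]]
    unfolding t_def by simp_all
  have ax: "a * x = p * x - N *\<^sub>R x"
    unfolding p_def by (simp add: algebra_simps)
  have three: "(3 * N) *\<^sub>R t = (2 * N) *\<^sub>R t + N *\<^sub>R t"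
    by (simp add: scaleR_left_distrib[symmetric])
  have "a * x \<le> (3 * N) *\<^sub>R t"
    unfolding ax three diff_conv_add_uminus by (rule add_mono[OF px minus_Nx])
  moreover have "- (a * x) \<le> (3 * N) *\<^sub>R t"
    unfolding ax three using add_mono[OF minus_px Nx] by simp
  ultimately show ?thesis
    unfolding labs_def[of "a * x"] t_def by simp
qed

lemma l_ideal_adjoin:
  assumes M: "l_ideal M"
  shows "l_ideal {x::'a. \<exists>m\<in>M. \<exists>k\<ge>0. labs x \<le> m + k *\<^sub>R c}" (is "l_ideal ?J")
  unfolding l_ideal_def
proof (intro conjI ballI allI impI)
  show "0 \<in> ?J"
    using M unfolding l_ideal_def by (intro CollectI bexI[of _ 0] exI[of _ 0]) (auto simp: labs_def)
next
  fix x y assume "x \<in> ?J" and "y \<in> ?J"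
  then obtain m1 k1 m2 k2 where m: "m1 \<in> M" "m2 \<in> M" and k: "0 \<le> k1" "0 \<le> k2"
    and "labs x \<le> m1 + k1 *\<^sub>R c" and "labs y \<le> m2 + k2 *\<^sub>R c"
    by auto
  then have "labs (x + y) \<le> (m1 + k1 *\<^sub>R c) + (m2 + k2 *\<^sub>R c)"
    by (intro order_trans[OF labs_add_le add_mono])
  then have "labs (x + y) \<le> (m1 + m2) + (k1 + k2) *\<^sub>R c"
    by (simp add: algebra_simps scaleR_left_distrib)
  then show "x + y \<in> ?J"
    using l_ideal_add[OF M m] k by (intro CollectI bexI[of _ "m1 + m2"] exI[of _ "k1 + k2"]) simp_all
next
  fix a y :: 'a
  assume "y \<in> ?J"
  then obtain m k where m: "m \<in> M" and k: "0 \<le> k" and y: "labs y \<le> m + k *\<^sub>R c"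
    by auto
  obtain N where N: "0 \<le> N" "labs a \<le> N *\<^sub>R 1"
    using bal_labs_le_scaleR_one by blast
  have "labs (a * y) \<le> (3 * N) *\<^sub>R labs y"
    by (rule bal_labs_mult_le[OF N])
  also have "\<dots> \<le> (3 * N) *\<^sub>R (m + k *\<^sub>R c)"
    using N(1) y by (simp add: bal_scaleR_left_mono)
  also have "\<dots> = (3 * N) *\<^sub>R m + (3 * N * k) *\<^sub>R c"
    by (simp add: scaleR_add_right)
  finally show "a * y \<in> ?J"
    using l_ideal_scaleR[OF M m] N(1) k
    by (intro CollectI bexI[of _ "(3 * N) *\<^sub>R m"] exI[of _ "3 * N * k"]) simp_all
next
  fix x y assume xy: "y \<in> ?J \<and> labs x \<le> labs y"
  then obtain m k where m: "m \<in> M" and k: "0 \<le> k" and y: "labs y \<le> m + k *\<^sub>R c"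
    by auto
  have "labs x \<le> m + k *\<^sub>R c"
    using order_trans[OF conjunct2[OF xy] y] .
  then show "x \<in> ?J"
    using m k by (intro CollectI bexI[of _ m] exI[of _ k]) simp_all
qed

lemma maximal_l_ideal_unit_le:
  assumes M: "maximal_l_ideal M" and c: "0 \<le> c" "c \<notin> M"
  shows "\<exists>m\<in>M. \<exists>k\<ge>0. (1::'a) \<le> m + k *\<^sub>R c"
proof -
  let ?J = "{x::'a. \<exists>m\<in>M. \<exists>k\<ge>0. labs x \<le> m + k *\<^sub>R c}"
  have lM: "l_ideal M" and M_max: "\<And>J. l_ideal J \<Longrightarrow> J \<noteq> UNIV \<Longrightarrow> M \<subseteq> J \<Longrightarrow> J = M"
    using M unfolding maximal_l_ideal_def by auto
  have MJ: "M \<subseteq> ?J"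
  proof
    fix m assume "m \<in> M"
    moreover have "labs (labs m) \<le> labs m"
      by (simp add: labs_of_nonneg[OF bal_labs_nonneg])
    ultimately have "labs m \<in> M"
      by (rule l_ideal_solid[OF lM])
    then show "m \<in> ?J"
      by (intro CollectI bexI[of _ "labs m"] exI[of _ 0]) simp_all
  qed
  have "c \<in> ?J"
    using lM labs_of_nonneg[OF c(1)] unfolding l_ideal_def
    by (intro CollectI bexI[of _ 0] exI[of _ 1]) simp_all
  then have "?J \<noteq> M"
    using c(2) by blast
  then have "?J = UNIV"
    using M_max[OF l_ideal_adjoin[OF lM] _ MJ] by blast
  then have "(1::'a) \<in> ?J"
    by simp
  then obtain m k where "m \<in> M" "0 \<le> k" "labs (1::'a) \<le> m + k *\<^sub>R c"
    by blast
  then show ?thesis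
    using order_trans[OF labs_ge_self] by auto
qed

text \<open>If \<open>c \<notin> M\<close>, maximality gives \<open>1 \<le> m + k c\<close> with \<open>m \<in> M\<close>, and then for \<open>n > B k\<close> the
  positive multiple \<open>(n - B k) c\<close> is dominated by an element of \<open>M\<close>.\<close>

lemma maximal_l_ideal_infinitesimal:
  assumes M: "maximal_l_ideal M" and c0: "0 \<le> (c::'a)" and B: "0 \<le> B"
    and small: "\<And>n::nat. n \<ge> 1 \<Longrightarrow> \<exists>r\<in>M. real n *\<^sub>R c \<le> B *\<^sub>R 1 + r"
  shows "c \<in> M"
proof (rule ccontr)
  assume cM: "c \<notin> M"
  have lM: "l_ideal M"
    using M by (simp add: maximal_l_ideal_def)
  obtain m k where m: "m \<in> M" and k: "0 \<le> k" and one: "1 \<le> m + k *\<^sub>R c"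
    using maximal_l_ideal_unit_le[OF M c0 cM] by blast
  obtain n :: nat where nB: "B * k < real n"
    using reals_Archimedean2 by blast
  then have "0 < real n"
    using mult_nonneg_nonneg[OF B k] by linarith
  then obtain r where r: "r \<in> M" and nc: "real n *\<^sub>R c \<le> B *\<^sub>R 1 + r"
    using small[of n] by auto
  have "real n *\<^sub>R c \<le> B *\<^sub>R (m + k *\<^sub>R c) + r"
    using nc add_right_mono[OF bal_scaleR_left_mono[OF B one]] by (rule order_trans)
  then have "real n *\<^sub>R c - (B * k) *\<^sub>R c \<le> B *\<^sub>R m + r"
    by (simp add: scaleR_add_right algebra_simps)
  then have "(real n - B * k) *\<^sub>R c \<le> B *\<^sub>R m + r"
    by (simp add: scaleR_diff_left)
  then have "c \<le> (1 / (real n - B * k)) *\<^sub>R (B *\<^sub>R m + r)"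
    using bal_scaleR_left_mono[of "1 / (real n - B * k)"] nB by fastforce
  moreover have "(1 / (real n - B * k)) *\<^sub>R (B *\<^sub>R m + r) \<in> M"
    by (intro l_ideal_scaleR[OF lM] l_ideal_add[OF lM] l_ideal_scaleR[OF lM m] r)
  ultimately have "c \<in> M"
    using l_ideal_nonneg_le[OF lM _ c0] by blast
  with cM show False
    by contradiction
qed

lemma maximal_l_ideal_archimedean:
  assumes M: "maximal_l_ideal M"
  shows "archimedean_l_ideal (M::'a set)"
  unfolding archimedean_l_ideal_def
proof (intro conjI allI impI)
  show "l_ideal M"
    using M by (simp add: maximal_l_ideal_def)
  fix a b :: 'a
  assume H: "\<forall>n::nat. n \<ge> 1 \<longrightarrow> quot_le M (of_nat n * a) b"
  obtain B where B: "0 \<le> B" "labs b \<le> B *\<^sub>R 1"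
    using bal_labs_le_scaleR_one by blast
  have "sup a 0 \<in> M"
  proof (rule maximal_l_ideal_infinitesimal[OF M _ B(1)])
    fix n :: nat assume n: "n \<ge> 1"
    define r where "r = sup (of_nat n * a - b) 0"
    have "of_nat n * a - b \<le> r"
      unfolding r_def by simp
    then have "of_nat n * a \<le> b + r"
      by (simp add: diff_le_eq add.commute)
    also have "\<dots> \<le> B *\<^sub>R 1 + r"
      using order_trans[OF labs_ge_self B(2)] by (rule add_right_mono)
    finally have "real n *\<^sub>R a \<le> B *\<^sub>R 1 + r"
      by (simp add: scaleR_conv_of_real)
    then have "a \<le> (1 / real n) *\<^sub>R (B *\<^sub>R 1 + r)"
      using bal_scaleR_left_mono[of "1 / real n"] n by fastforce
    moreover have "0 \<le> (1 / real n) *\<^sub>R (B *\<^sub>R 1 + r)"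
      using order_trans[OF bal_labs_nonneg B(2)] unfolding r_def
      by (intro bal_scaleR_nonneg[of "1 / real n"] add_nonneg_nonneg) simp_all
    ultimately have "sup a 0 \<le> (1 / real n) *\<^sub>R (B *\<^sub>R 1 + r)"
      by (rule sup_least)
    then have "real n *\<^sub>R sup a 0 \<le> B *\<^sub>R 1 + r"
      using bal_scaleR_left_mono[of "real n"] n by fastforce
    moreover have "r \<in> M"
      using H n unfolding quot_le_def r_def by simp
    ultimately show "\<exists>r\<in>M. real n *\<^sub>R sup a 0 \<le> B *\<^sub>R 1 + r"
      by blast
  qed simp
  then show "quot_le M a 0"
    unfolding quot_le_def by simp
qed

end

theorem mainTheorem13:
  fixes A :: "'a::{comm_ring_1, real_algebra_1, ordered_ab_group_add, lattice} itself"
  assumes "bal_algebra A"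
  shows "bal_iso_N_B (alexandroff_topology (arch_spec A)) (max_spec A) (restrict_to (max_spec A))"
proof -
  interpret cofinal_maxima "arch_spec A" "max_spec A"
  proof
    show "max_spec A \<subseteq> arch_spec A"
      using maximal_l_ideal_archimedean[OF assms]
      unfolding max_spec_def arch_spec_def maximal_l_ideal_def by auto
  next
    fix x assume "x \<in> arch_spec A"
    then have "l_ideal x" and "x \<noteq> UNIV"
      unfolding arch_spec_def by auto
    then show "\<exists>m\<in>max_spec A. x \<subseteq> m"
      using exists_maximal_l_ideal unfolding max_spec_def by auto
  next
    fix m z assume "m \<in> max_spec A" and "z \<in> arch_spec A" and "m \<subseteq> z"
    then show "z = m"
      unfolding max_spec_def arch_spec_def maximal_l_ideal_def by auto
  qed
  show ?thesis
    by (rule bal_iso_restrict_to)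
qed

end
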